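(* Let $N, M \in \mathrm{GL}(3,\mathbb{Z})$ satisfy: (i) $NM = MN$; (ii) $1$ is an eigenvalue of $N^n M^m$ for all $(n,m) \in \mathbb{Z}^2$; (iii) $\{k \in \mathbb{Z}^3 : N^n M^m k = k \text{ for all } (n,m) \in \mathbb{Z}^2\} = \{0\}$. Then there exist $P \in \mathrm{GL}(3,\mathbb{Z})$ and integers $a,b,c,d$ such that $$P N P^{-1} = \begin{bmatrix} 1 & a & b \\ 0 & -1 & 0 \\ 0 & 0 & -1 \end{bmatrix}, \quad P M P^{-1} = \begin{bmatrix} -1 & 0 & c \\ 0 & -1 & d \\ 0 & 0 & 1 \end{bmatrix}.$$ In particular, the subgroup of $\mathrm{GL}(3,\mathbb{Z})$ generated by $N$ and $M$ is isomorphic to the Klein four-group. *)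

theory Defs
  imports "HOL-Analysis.Analysis"
begin

text \<open>Integer 3x3 matrices are elements of type int^3^3; GL(3,Z) membership is
  the library notion invertible (two-sided inverse with integer entries).\<close>

definition matpow :: "'a::semiring_1^'n^'n \<Rightarrow> nat \<Rightarrow> 'a^'n^'n" where
  "matpow A k = ((\<lambda>B. A ** B) ^^ k) (mat 1)"

definition matzpow :: "'a::semiring_1^'n^'n \<Rightarrow> int \<Rightarrow> 'a^'n^'n" where
  "matzpow A k = (if 0 \<le> k then matpow A (nat k) else matpow (matrix_inv A) (nat (- k)))"

definition int_mat_eigenvalue :: "int^'n^'n \<Rightarrow> complex \<Rightarrow> bool" where
  "int_mat_eigenvalue A lam \<longleftrightarrow>
     (\<exists>v :: complex^'n. v \<noteq> 0 \<and> (\<chi> i j. of_int (A$i$j)) *v v = lam *s v)"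

end

theory Submission
  imports Defs
begin

text \<open>
  The key observation: if \<open>A\<close> commutes with \<open>B\<close>, they share no fixed vector, and \<open>B\<close> and
  \<open>AB\<close> both fix some vector, then the fixed vectors of \<open>A\<close> span at most a line. Were they
  to span a plane \<open>V\<close>, then \<open>B\<close> and \<open>AB\<close>, whose fixed vectors lie off \<open>V\<close>, would act
  trivially on the quotient by \<open>V\<close>, hence so would \<open>A\<close>; for \<open>w \<notin> V\<close> the nonzero
  vector \<open>Aw - w \<in> V\<close> would then be fixed by \<open>B\<close> as well. So \<open>B\<close> preserves the fixed line of \<open>A\<close>,
  acts on it by a unit, and not by \<open>1\<close>, i.e. by \<open>-1\<close>.

  Applied to the pairs \<open>(N, M)\<close>, \<open>(M, N)\<close> and \<open>(NM, M)\<close> this yields common eigenvectors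
  \<open>v\<^sub>1, v\<^sub>2, v\<^sub>3\<close> on which \<open>(N, M)\<close> act by \<open>(1, -1)\<close>, \<open>(-1, 1)\<close> and \<open>(-1, -1)\<close>. They are
  linearly independent, so \<open>N\<^sup>2 = M\<^sup>2 = 1\<close> and \<open>1, N, M, NM\<close> are distinct. For the normal
  form, complete the primitive vector on the line of \<open>v\<^sub>1\<close> to a basis of \<open>\<int>\<^sup>3\<close>; in it \<open>N\<close>
  acts as \<open>-1\<close> modulo that line, and the induced involution of \<open>M\<close>, being neither \<open>1\<close> nor
  \<open>-1\<close>, is triangular in a suitable basis of \<open>\<int>\<^sup>2\<close>.
\<close>

section \<open>Vectors and matrices of size three\<close>

lemma vec3_eq_iff: "(x::'a^3) = y \<longleftrightarrow> x$1 = y$1 \<and> x$2 = y$2 \<and> x$3 = y$3"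
  by (simp add: vec_eq_iff forall_3)

lemma mat3_eq_iff: "(A::'a^3^3) = B \<longleftrightarrow>
  A$1$1 = B$1$1 \<and> A$1$2 = B$1$2 \<and> A$1$3 = B$1$3 \<and>
  A$2$1 = B$2$1 \<and> A$2$2 = B$2$2 \<and> A$2$3 = B$2$3 \<and>
  A$3$1 = B$3$1 \<and> A$3$2 = B$3$2 \<and> A$3$3 = B$3$3"
  by (simp add: vec_eq_iff forall_3)

lemma matrix_vector_mult_3:
  "((A::'a::semiring_1^3^3) *v x) $ i = A$i$1 * x$1 + A$i$2 * x$2 + A$i$3 * x$3"
  by (simp add: matrix_vector_mult_def sum_3)

lemma matrix_matrix_mult_3:
  "((A::'a::semiring_1^3^3) ** B) $ i $ j = A$i$1 * B$1$j + A$i$2 * B$2$j + A$i$3 * B$3$j"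
  by (simp add: matrix_matrix_mult_def sum_3)

lemma matrix_vector_mult_smult:
  "(A::'a::comm_semiring_1^'n^'m) *v (c *s x) = c *s (A *v x)"
  by (simp add: vec_eq_iff matrix_vector_mult_def sum_distrib_left mult_ac)

lemma matrix_vector_mult_uminus: "(A::'a::ring_1^'n^'m) *v (- x) = - (A *v x)"
  by (simp add: vec_eq_iff matrix_vector_mult_def sum_negf)

lemma matrix_vector_mult_axis: "(A *v axis j 1) $ i = A $ i $ j"
  by (simp add: matrix_vector_mult_def axis_def if_distrib cong: if_cong)

lemma matrix_eq_if_mult_vector_eq:
  "(\<And>x. (A::'a::semiring_1^'n^'m) *v x = B *v x) \<Longrightarrow> A = B"
  by (metis matrix_vector_mult_axis vec_eq_iff)

lemma smult_eq_0_iff: "c *s (x::'a::idom^'n) = 0 \<longleftrightarrow> c = 0 \<or> x = 0"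
  by (auto simp: vec_eq_iff)

lemma smult_left_cancel: "(c::'a::idom) \<noteq> 0 \<Longrightarrow> c *s x = c *s y \<longleftrightarrow> x = (y::'a^'n)"
  by (auto simp: vec_eq_iff)

text \<open>The library's inner product and \<open>cross3\<close> are defined for real vectors only.\<close>

definition rdot :: "'a::comm_ring_1^3 \<Rightarrow> 'a^3 \<Rightarrow> 'a" where
  "rdot x y = x$1 * y$1 + x$2 * y$2 + x$3 * y$3"

definition rcross :: "'a::comm_ring_1^3 \<Rightarrow> 'a^3 \<Rightarrow> 'a^3" where
  "rcross x y = vector [x$2 * y$3 - x$3 * y$2, x$3 * y$1 - x$1 * y$3, x$1 * y$2 - x$2 * y$1]"

definition triple :: "'a::comm_ring_1^3 \<Rightarrow> 'a^3 \<Rightarrow> 'a^3 \<Rightarrow> 'a" where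
  "triple a b c = rdot a (rcross b c)"

lemma rcross_component [simp]:
  "rcross x y $ 1 = x$2 * y$3 - x$3 * y$2"
  "rcross x y $ 2 = x$3 * y$1 - x$1 * y$3"
  "rcross x y $ 3 = x$1 * y$2 - x$2 * y$1"
  by (simp_all add: rcross_def)

lemma rdot_simps [simp]:
  "rdot (x + y) z = rdot x z + rdot y z"
  "rdot (x - y) z = rdot x z - rdot y z"
  "rdot (c *s x) z = c * rdot x z"
  "rdot (- x) z = - rdot x z"
  "rdot 0 z = 0"
  "rdot z (c *s x) = c * rdot z x"
  by (simp_all add: rdot_def algebra_simps)

lemma rdot_rcross: "rdot c (rcross a b) = triple a b c"
  unfolding triple_def rdot_def by (simp add: algebra_simps)

lemma rcross_smult_left: "rcross (c *s x) y = c *s rcross x y"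
  by (simp add: vec3_eq_iff algebra_simps)

lemma rcross_eq_0_imp_parallel:
  fixes p q s :: "'a::idom^3"
  assumes "rdot s p = 1" "rcross p q = 0"
  shows "q = rdot s q *s p"
  using assms unfolding vec3_eq_iff rdot_def by (simp; algebra)

lemma det_eq_triple_rows: "det (A::'a::comm_ring_1^3^3) = triple (A$1) (A$2) (A$3)"
  unfolding det_3 triple_def rdot_def by (simp add: algebra_simps)

lemma triple_cramer:
  "triple a b c *s z = triple z b c *s a + triple a z c *s b + triple a b z *s c"
  unfolding vec3_eq_iff triple_def rdot_def by (simp add: algebra_simps)

lemma rdot_self_eq_0_iff: "rdot (x::'a::linordered_idom^3) x = 0 \<longleftrightarrow> x = 0"
  by (auto simp: rdot_def vec3_eq_iff add_nonneg_eq_0_iff)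

lemma matrix_eq_on_basis:
  fixes A B :: "'a::idom^3^3"
  assumes "triple v1 v2 v3 \<noteq> 0"
    and "A *v v1 = B *v v1" "A *v v2 = B *v v2" "A *v v3 = B *v v3"
  shows "A = B"
proof (rule matrix_eq_if_mult_vector_eq)
  fix z
  have "triple v1 v2 v3 *s (A *v z) = triple v1 v2 v3 *s (B *v z)"
    unfolding matrix_vector_mult_smult[symmetric] triple_cramer[of v1 v2 v3 z]
    by (simp add: matrix_vector_right_distrib matrix_vector_mult_smult assms(2-4))
  then show "A *v z = B *v z" using assms(1) by (simp add: smult_left_cancel)
qed

lemma rcross_axis_nonzero:
  assumes "(x::'a::comm_ring_1^3) \<noteq> 0"
  shows "\<exists>j. rcross x (axis j 1) \<noteq> 0"
proof (rule ccontr)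
  assume "\<not> ?thesis"
  then have "rcross x (axis 1 1) = 0" "rcross x (axis 2 1) = 0" by auto
  then have "x = 0" by (simp add: vec3_eq_iff axis_def)
  with assms show False by simp
qed

lemma det_eq_0_imp_kernel:
  fixes C :: "'a::comm_ring_1^3^3"
  assumes "det C = 0"
  shows "\<exists>x. x \<noteq> 0 \<and> C *v x = 0"
proof -
  have rows: "triple (C$1) (C$2) (C$3) = 0" using assms by (simp add: det_eq_triple_rows)
  have kernel: "C *v x = 0" if "\<And>i. rdot (C$i) x = 0" for x
    using that by (simp add: vec3_eq_iff matrix_vector_mult_3 rdot_def)
  show ?thesis
  proof (cases "\<exists>i j. rcross (C$i) (C$j) \<noteq> 0")
    case True
    then obtain i j where "rcross (C$i) (C$j) \<noteq> 0" by blast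
    moreover have "rdot (C$k) (rcross (C$i) (C$j)) = 0" for k
      using exhaust_3[of i] exhaust_3[of j] exhaust_3[of k] rows unfolding triple_def rdot_def
      by (auto simp: algebra_simps)
    ultimately show ?thesis using kernel by blast
  next
    case False
    then have parallel: "rcross (C$i) (C$j) = 0" for i j by blast
    show ?thesis
    proof (cases "C = 0")
      case True
      moreover have "axis 1 (1::'a) \<noteq> 0" by (simp add: axis_eq_0_iff)
      ultimately show ?thesis by (metis matrix_vector_mult_0)
    next
      case False
      then obtain k where "C$k \<noteq> 0" by (metis vec_eq_iff zero_index)
      then obtain j where j: "rcross (C$k) (axis j 1) \<noteq> 0" using rcross_axis_nonzero by blast
      have "rdot (C$i) (rcross (C$k) (axis j 1)) = 0" for i
        using arg_cong[OF parallel[of i k], of "\<lambda>v. v$j"] exhaust_3[of j]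
        by (auto simp: rdot_def axis_def algebra_simps)
      with j show ?thesis using kernel by blast
    qed
  qed
qed

lemma triple_eq_0_imp_dependent:
  fixes a b c :: "'a::comm_ring_1^3"
  assumes "triple a b c = 0"
  shows "\<exists>x::'a^3. x \<noteq> 0 \<and> x$1 *s a + x$2 *s b + x$3 *s c = 0"
proof -
  define R :: "'a^3^3" where "R = vector [a, b, c]"
  have "det (transpose R) = 0"
    using assms unfolding det_transpose by (simp add: det_eq_triple_rows R_def)
  then obtain x where "x \<noteq> 0" "transpose R *v x = 0" using det_eq_0_imp_kernel by blast
  then show ?thesis by (auto simp: matrix_vector_column sum_3 R_def)
qed

definition adj3 :: "'a::comm_ring_1^3^3 \<Rightarrow> 'a^3^3" where
  "adj3 A = transpose (vector [rcross (A$2) (A$3), rcross (A$3) (A$1), rcross (A$1) (A$2)])"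

lemma adj3_mult:
  fixes A :: "'a::idom^3^3"
  shows "A ** adj3 A = (\<chi> i j. if i = j then det A else 0)"
    and "adj3 A ** A = (\<chi> i j. if i = j then det A else 0)"
  unfolding mat3_eq_iff det_3
  by (intro conjI; simp add: matrix_matrix_mult_3 adj3_def transpose_def; algebra)+

lemma adj3_inverse:
  fixes A :: "'a::idom^3^3"
  assumes "det A = 1"
  shows "A ** adj3 A = mat 1" "adj3 A ** A = mat 1"
  using assms by (simp_all add: adj3_mult mat_def vec_eq_iff)

section \<open>Primitive integer vectors\<close>

lemma int_pair_primitive:
  fixes x y :: int
  shows "\<exists>g u v a b. x = g * u \<and> y = g * v \<and> a * u + b * v = 1"
proof (cases "x = 0 \<and> y = 0")
  case True
  then show ?thesis by (intro exI[of _ 0] exI[of _ 1] exI[of _ 0] exI[of _ 1]) simp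
next
  case False
  define g where "g = gcd x y"
  have "coprime (x div g) (y div g)" using div_gcd_coprime False g_def by blast
  then obtain a b where "a * (x div g) + b * (y div g) = 1"
    using bezout_int coprime_iff_gcd_eq_1 by metis
  moreover have "x = g * (x div g)" "y = g * (y div g)" by (simp_all add: g_def)
  ultimately show ?thesis by blast
qed

lemma primitive_vector:
  fixes x :: "int^3"
  assumes "x \<noteq> 0"
  shows "\<exists>c p s. c \<noteq> 0 \<and> x = c *s p \<and> rdot s p = 1"
proof -
  define g where "g = gcd (x$1) (gcd (x$2) (x$3))"
  have "g \<noteq> 0" using assms by (simp add: g_def vec3_eq_iff)
  obtain u2 u3 where u: "u2 * x$2 + u3 * x$3 = gcd (x$2) (x$3)" using bezout_int by blast
  obtain a b where ab: "a * x$1 + b * gcd (x$2) (x$3) = g" using bezout_int g_def by blast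
  define s :: "int^3" where "s = vector [a, b * u2, b * u3]"
  define p :: "int^3" where "p = (\<chi> i. x$i div g)"
  have "g dvd x$1" "g dvd x$2" "g dvd x$3" unfolding g_def by (auto intro: dvd_trans)
  then have x: "x = g *s p" by (simp add: vec3_eq_iff p_def)
  have "g * rdot s p = rdot s x" by (simp add: x rdot_def algebra_simps)
  also have "\<dots> = a * x$1 + b * (u2 * x$2 + u3 * x$3)" by (simp add: s_def rdot_def algebra_simps)
  also have "\<dots> = g" using u ab by simp
  finally have "rdot s p = 1" using \<open>g \<noteq> 0\<close> by simp
  with x \<open>g \<noteq> 0\<close> show ?thesis by blast
qed

lemma unimodular_completion:
  fixes p s :: "int^3"
  assumes "rdot s p = 1"
  shows "\<exists>Q Q' :: int^3^3. Q ** Q' = mat 1 \<and> Q' ** Q = mat 1 \<and> Q *v axis 1 1 = p"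
proof -
  obtain g q2 q3 a b where q: "p$2 = g * q2" "p$3 = g * q3" "a * q2 + b * q3 = 1"
    using int_pair_primitive by blast
  define e where "e = s$2 * q2 + s$3 * q3"
  have e: "s$1 * p$1 + e * g = 1" using assms q by (simp add: e_def rdot_def algebra_simps)
  define Q :: "int^3^3" where
    "Q = vector [vector [p$1, -e, 0], vector [g * q2, s$1 * q2, -b], vector [g * q3, s$1 * q3, a]]"
  have "det Q = (s$1 * p$1 + e * g) * (a * q2 + b * q3)"
    unfolding Q_def det_3 by (simp add: algebra_simps)
  then have "det Q = 1" using e q by simp
  moreover have "Q *v axis 1 1 = p"
    using q by (simp add: Q_def vec3_eq_iff matrix_vector_mult_axis)
  ultimately show ?thesis using adj3_inverse[of Q] by blast
qed

section \<open>Inverses and integer powers\<close>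

lemma matrix_inv_left: "invertible A \<Longrightarrow> matrix_inv A ** A = mat 1"
  unfolding invertible_def matrix_inv_def by (metis (mono_tags, lifting) someI_ex)

lemma matrix_inv_unique:
  assumes "(A::'a::semiring_1^'n^'n) ** B = mat 1" "B ** A = mat 1"
  shows "matrix_inv A = B"
proof -
  have "invertible A" using assms unfolding invertible_def by blast
  have "matrix_inv A = matrix_inv A ** (A ** B)" by (simp add: assms(1))
  also have "\<dots> = B"
    by (metis matrix_mul_assoc matrix_inv_left[OF \<open>invertible A\<close>] matrix_mul_lid)
  finally show ?thesis .
qed

lemma conjugate_by_basis:
  fixes F G X T :: "'a::semiring_1^'n^'n"
  assumes "F ** G = mat 1" "G ** F = mat 1" "X ** F = F ** T"
  shows "G ** X ** matrix_inv G = T"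
proof -
  have "G ** X ** matrix_inv G = G ** (X ** F)"
    by (simp add: matrix_inv_unique[OF assms(2,1)] matrix_mul_assoc)
  also have "\<dots> = T" by (metis assms(2,3) matrix_mul_assoc matrix_mul_lid)
  finally show ?thesis .
qed

lemma matpow_0 [simp]: "matpow A 0 = mat 1"
  and matpow_Suc: "matpow A (Suc k) = A ** matpow A k"
  by (simp_all add: matpow_def)

lemma matzpow_simps [simp]:
  "matzpow A 0 = mat 1" "matzpow A 1 = A" "matzpow A 2 = A ** A"
  by (simp_all add: matzpow_def matpow_def numeral_2_eq_2)

lemma matzpow_fixed:
  assumes "invertible (A::'a::comm_ring_1^'n^'n)" "A *v x = x"
  shows "matzpow A k *v x = x"
proof -
  have pow: "matpow B j *v x = x" if "B *v x = x" for B :: "'a^'n^'n" and j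
    using that by (induction j) (simp_all add: matpow_def matrix_vector_mul_assoc[symmetric])
  have "matrix_inv A *v x = matrix_inv A *v (A *v x)" using assms(2) by simp
  also have "\<dots> = x" by (simp add: matrix_vector_mul_assoc matrix_inv_left assms(1))
  finally show ?thesis using assms(2) by (simp add: matzpow_def pow)
qed

lemma matzpow_involution:
  assumes "(A::'a::semiring_1^'n^'n) ** A = mat 1"
  shows "matzpow A k = (if even k then mat 1 else A)"
proof -
  have "matpow A j = (if even j then mat 1 else A)" for j
    using assms by (induction j) (auto simp: matpow_Suc)
  moreover have "matrix_inv A = A" using matrix_inv_unique[OF assms assms] .
  ultimately show ?thesis by (simp add: matzpow_def even_nat_iff)
qed

lemma zpow_products_of_involutions:
  fixes N M :: "'a::semiring_1^'n^'n"
  assumes "N ** N = mat 1" "M ** M = mat 1"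
  shows "{matzpow N n ** matzpow M m | n m :: int. True} = {mat 1, N, M, N ** M}"
proof
  show "{matzpow N n ** matzpow M m | n m :: int. True} \<subseteq> {mat 1, N, M, N ** M}"
    using matzpow_involution[OF assms(1)] matzpow_involution[OF assms(2)] by auto
  have "mat 1 = matzpow N 0 ** matzpow M 0" "N = matzpow N 1 ** matzpow M 0"
    "M = matzpow N 0 ** matzpow M 1" "N ** M = matzpow N 1 ** matzpow M 1"
    by simp_all
  then show "{mat 1, N, M, N ** M} \<subseteq> {matzpow N n ** matzpow M m | n m :: int. True}"
    by blast
qed

section \<open>Fixed vectors of commuting matrices\<close>

lemma det_of_int:
  "det (\<chi> i j. of_int (A$i$j) :: 'a::comm_ring_1^'n^'n) = of_int (det (A::int^'n^'n))"
  by (simp add: det_def of_int_sum of_int_mult of_int_prod)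

definition has_fixed_vector :: "'a::semiring_1^'n^'n \<Rightarrow> bool" where
  "has_fixed_vector A \<longleftrightarrow> (\<exists>x. x \<noteq> 0 \<and> A *v x = x)"

lemma int_mat_eigenvalue_1_imp_fixed_vector:
  fixes A :: "int^3^3"
  assumes "int_mat_eigenvalue A 1"
  shows "has_fixed_vector A"
proof -
  define C :: "complex^3^3" where "C = (\<chi> i j. of_int (A$i$j)) - mat 1"
  obtain v :: "complex^3" where "v \<noteq> 0" "(\<chi> i j. of_int (A$i$j)) *v v = v"
    using assms unfolding int_mat_eigenvalue_def by auto
  then have v: "v \<noteq> 0" "C *v v = 0"
    by (simp_all add: C_def matrix_vector_mult_diff_rdistrib)
  have "det C = 0"
  proof (rule ccontr)
    assume "det C \<noteq> 0"
    then obtain C' where "C' ** C = mat 1" by (meson invertible_det_nz invertible_def)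
    then have "v = C' *v (C *v v)" by (simp add: matrix_vector_mul_assoc)
    with v show False by simp
  qed
  moreover have "C = (\<chi> i j. of_int ((A - mat 1)$i$j))"
    by (simp add: C_def vec_eq_iff mat_def)
  ultimately have "of_int (det (A - mat 1)) = (0::complex)" by (metis det_of_int)
  then have "det (A - mat 1) = 0" by simp
  then obtain x where "x \<noteq> 0" "(A - mat 1) *v x = 0" using det_eq_0_imp_kernel by blast
  then show ?thesis by (auto simp: has_fixed_vector_def matrix_vector_mult_diff_rdistrib)
qed

lemma fixed_vectors_orthogonal_cross:
  fixes A :: "int^3^3"
  assumes "A \<noteq> mat 1" and x: "A *v x = x" and y: "A *v y = y" and "rcross x y \<noteq> 0"
  shows "A *v u = u \<longleftrightarrow> rdot u (rcross x y) = 0"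
proof -
  have fixed_if: "A *v z = z" if "A *v (triple x y u *s z) = triple x y u *s z" "triple x y u \<noteq> 0"
    for u z using that by (simp add: matrix_vector_mult_smult smult_left_cancel)
  have "rdot u (rcross x y) = 0" if u: "A *v u = u"
  proof (rule ccontr)
    assume "rdot u (rcross x y) \<noteq> 0"
    then have "A *v z = mat 1 *v z" for z
      using fixed_if[of u z] unfolding triple_cramer[of x y u z]
      by (simp add: matrix_vector_right_distrib matrix_vector_mult_smult x y u rdot_rcross)
    with \<open>A \<noteq> mat 1\<close> show False using matrix_eq_if_mult_vector_eq by blast
  qed
  moreover have "A *v u = u" if "rdot u (rcross x y) = 0"
  proof -
    have "triple x y (rcross x y) \<noteq> 0"
      using \<open>rcross x y \<noteq> 0\<close> by (metis rdot_rcross rdot_self_eq_0_iff)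
    with that show ?thesis
      using fixed_if[of "rcross x y" u] unfolding triple_cramer[of x y _ u]
      by (simp add: matrix_vector_right_distrib matrix_vector_mult_smult x y rdot_rcross)
  qed
  ultimately show ?thesis by blast
qed

lemma preserved_plane_quotient_trivial:
  fixes C :: "'a::idom^3^3"
  assumes "\<And>u. rdot u w = 0 \<Longrightarrow> rdot (C *v u) w = 0" and "C *v z = z" "rdot z w \<noteq> 0"
  shows "rdot (C *v w) w = rdot w w"
proof -
  define h where "h = rdot w w *s z - rdot z w *s w"
  have "rdot h w = 0" by (simp add: h_def mult.commute)
  then have "rdot (C *v h) w = 0" by (rule assms(1))
  moreover have "C *v h = rdot w w *s z - rdot z w *s (C *v w)"
    by (simp add: h_def matrix_vector_mult_diff_distrib matrix_vector_mult_smult assms(2))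
  ultimately have "rdot z w * (rdot w w - rdot (C *v w) w) = 0" by (simp add: algebra_simps)
  with assms(3) show ?thesis by simp
qed

lemma displacement_common_fixed:
  fixes A B :: "'a::comm_ring_1^'n^'n"
  assumes AB: "A ** B = B ** A"
    and f: "A *v (B *v w - w) = B *v w - w"
    and g: "A *v ((A ** B) *v w - w) = (A ** B) *v w - w"
  shows "A *v (A *v w - w) = A *v w - w" "B *v (A *v w - w) = A *v w - w"
proof -
  have ABw: "(A ** B) *v w = A *v w + (B *v w - w)"
    using f by (simp add: matrix_vector_mul_assoc[symmetric] matrix_vector_mult_diff_distrib
        diff_eq_eq add.commute)
  then have "A *v w - w = ((A ** B) *v w - w) - (B *v w - w)" by simp
  then show "A *v (A *v w - w) = A *v w - w" by (metis f g matrix_vector_mult_diff_distrib)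
  show "B *v (A *v w - w) = A *v w - w"
    using ABw by (simp add: AB matrix_vector_mul_assoc[symmetric]
        matrix_vector_mult_diff_distrib matrix_vector_right_distrib)
qed

lemma fixed_vectors_parallel:
  fixes A B :: "int^3^3"
  assumes AB: "A ** B = B ** A"
    and no_common: "\<And>x. A *v x = x \<Longrightarrow> B *v x = x \<Longrightarrow> x = 0"
    and "has_fixed_vector B" "has_fixed_vector (A ** B)"
    and x: "A *v x = x" and y: "A *v y = y"
  shows "rcross x y = 0"
proof (rule ccontr)
  obtain z0 z1 where z0: "z0 \<noteq> 0" "B *v z0 = z0" and z1: "z1 \<noteq> 0" "(A ** B) *v z1 = z1"
    using assms(3,4) by (auto simp: has_fixed_vector_def)
  define w where "w = rcross x y"
  assume w: "rcross x y \<noteq> 0"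
  have "A \<noteq> mat 1" using no_common z0 by auto
  then have fixed_iff: "A *v u = u \<longleftrightarrow> rdot u w = 0" for u
    unfolding w_def using fixed_vectors_orthogonal_cross[OF _ x y w] by blast
  have shift: "A *v (C *v w - w) = C *v w - w"
    if AC: "A ** C = C ** A" and z: "C *v z = z" "rdot z w \<noteq> 0" for C z
  proof -
    have "rdot (C *v u) w = 0" if "rdot u w = 0" for u
      using that AC fixed_iff by (metis matrix_vector_mul_assoc)
    then have "rdot (C *v w) w = rdot w w" using z by (rule preserved_plane_quotient_trivial)
    then show ?thesis by (simp add: fixed_iff)
  qed
  have "rdot z0 w \<noteq> 0" using fixed_iff no_common z0 by blast
  then have f: "A *v (B *v w - w) = B *v w - w" using shift[OF AB z0(2)] by blast
  have "rdot z1 w \<noteq> 0"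
  proof
    assume "rdot z1 w = 0"
    then have "A *v z1 = z1" by (simp add: fixed_iff)
    moreover from this have "B *v z1 = z1" using z1(2) AB by (metis matrix_vector_mul_assoc)
    ultimately show False using no_common z1(1) by blast
  qed
  moreover have "A ** (A ** B) = (A ** B) ** A" using AB by (simp add: matrix_mul_assoc)
  ultimately have "A *v ((A ** B) *v w - w) = (A ** B) *v w - w"
    using shift z1(2) by blast
  then have "A *v (A *v w - w) = A *v w - w" "B *v (A *v w - w) = A *v w - w"
    using displacement_common_fixed AB f by blast+
  moreover have "A *v w - w \<noteq> 0"
    using fixed_iff w by (auto simp: w_def rdot_self_eq_0_iff)
  ultimately show False using no_common by blast
qed

lemma fixed_vector_negated:
  fixes A B :: "int^3^3"
  assumes AB: "A ** B = B ** A" and "invertible B"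
    and no_common: "\<And>x. A *v x = x \<Longrightarrow> B *v x = x \<Longrightarrow> x = 0"
    and fixed: "has_fixed_vector B" "has_fixed_vector (A ** B)"
    and x: "A *v x = x"
  shows "B *v x = - x"
proof (cases "x = 0")
  case False
  then obtain c p s where c: "c \<noteq> 0" and xp: "x = c *s p" and s: "rdot s p = 1"
    using primitive_vector by blast
  have p: "A *v p = p" using x c by (simp add: xp matrix_vector_mult_smult smult_left_cancel)
  have "rcross x (B *v p) = 0"
    using fixed_vectors_parallel[OF AB no_common fixed x] p AB by (metis matrix_vector_mul_assoc)
  then have "rcross p (B *v p) = 0" using c by (simp add: xp rcross_smult_left smult_eq_0_iff)
  then obtain k where k: "B *v p = k *s p" using rcross_eq_0_imp_parallel[OF s] by blast
  have "p = matrix_inv B *v (B *v p)"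
    by (simp add: matrix_vector_mul_assoc matrix_inv_left \<open>invertible B\<close>)
  also have "\<dots> = k *s (matrix_inv B *v p)" by (simp add: k matrix_vector_mult_smult)
  finally have "k * rdot s (matrix_inv B *v p) = 1" using s by (metis rdot_simps(6))
  then have "k = 1 \<or> k = -1" by (auto simp: zmult_eq_1_iff)
  moreover have "p \<noteq> 0" using s by (auto simp: rdot_def)
  then have "k \<noteq> 1" using k p no_common by force
  ultimately have "B *v p = - p" using k by (simp add: vector_smult_lneg)
  then show ?thesis by (simp add: xp matrix_vector_mult_smult vector_smult_rneg)
qed simp

section \<open>Common eigenvectors\<close>

definition klein_eigenvectors :: "int^3^3 \<Rightarrow> int^3^3 \<Rightarrow> int^3 \<Rightarrow> int^3 \<Rightarrow> int^3 \<Rightarrow> bool" where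
  "klein_eigenvectors N M v1 v2 v3 \<longleftrightarrow> v1 \<noteq> 0 \<and> v2 \<noteq> 0 \<and> v3 \<noteq> 0 \<and>
     N *v v1 = v1 \<and> M *v v1 = - v1 \<and> N *v v2 = - v2 \<and> M *v v2 = v2 \<and>
     N *v v3 = - v3 \<and> M *v v3 = - v3"

lemma klein_eigenvectors_exist:
  fixes N M :: "int^3^3"
  assumes "invertible N" "invertible M" and NM: "N ** M = M ** N"
    and no_common: "\<And>x. N *v x = x \<Longrightarrow> M *v x = x \<Longrightarrow> x = 0"
    and fixed: "has_fixed_vector N" "has_fixed_vector M" "has_fixed_vector (N ** M)"
      "has_fixed_vector (N ** M ** M)"
  shows "\<exists>v1 v2 v3. klein_eigenvectors N M v1 v2 v3"
proof -
  obtain v1 where v1: "v1 \<noteq> 0" "N *v v1 = v1" using fixed(1) has_fixed_vector_def by blast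
  have "M *v v1 = - v1"
    using fixed_vector_negated[OF NM \<open>invertible M\<close> no_common fixed(2,3) v1(2)] .
  obtain v2 where v2: "v2 \<noteq> 0" "M *v v2 = v2" using fixed(2) has_fixed_vector_def by blast
  have "has_fixed_vector (M ** N)" using fixed(3) NM by simp
  then have "N *v v2 = - v2"
    using fixed_vector_negated[OF NM[symmetric] \<open>invertible N\<close> _ fixed(1) _ v2(2)] no_common
    by blast
  obtain v3 where v3: "v3 \<noteq> 0" "(N ** M) *v v3 = v3" using fixed(3) has_fixed_vector_def by blast
  have "(N ** M) ** M = M ** (N ** M)" by (metis NM matrix_mul_assoc)
  moreover have "x = 0" if "(N ** M) *v x = x" "M *v x = x" for x
    using that no_common by (metis matrix_vector_mul_assoc)
  ultimately have M3: "M *v v3 = - v3"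
    using fixed_vector_negated[OF _ \<open>invertible M\<close> _ fixed(2) _ v3(2)] fixed(4) by blast
  then have "N *v v3 = - v3"
    using v3(2) by (metis matrix_vector_mul_assoc matrix_vector_mult_uminus minus_equation_iff)
  with v1 v2 v3(1) M3 \<open>M *v v1 = - v1\<close> \<open>N *v v2 = - v2\<close> show ?thesis
    unfolding klein_eigenvectors_def by blast
qed

lemma klein_eigenvectors_independent:
  assumes "klein_eigenvectors N M v1 v2 v3"
  shows "triple v1 v2 v3 \<noteq> 0"
proof
  assume "triple v1 v2 v3 = 0"
  then obtain x :: "int^3" where x: "x \<noteq> 0" and rel: "x$1 *s v1 + x$2 *s v2 + x$3 *s v3 = 0"
    using triple_eq_0_imp_dependent by blast
  have ev: "N *v v1 = v1" "N *v v2 = - v2" "N *v v3 = - v3" "M *v v2 = v2" "M *v v3 = - v3"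
    and nz: "v1 \<noteq> 0" "v2 \<noteq> 0" "v3 \<noteq> 0"
    using assms by (simp_all add: klein_eigenvectors_def)
  have "N *v (x$1 *s v1 + x$2 *s v2 + x$3 *s v3) = 0" using rel by simp
  then have "x$1 *s v1 - x$2 *s v2 - x$3 *s v3 = 0"
    by (simp add: matrix_vector_right_distrib matrix_vector_mult_smult ev vector_smult_rneg)
  moreover have "(2 * x$1) *s v1
      = (x$1 *s v1 + x$2 *s v2 + x$3 *s v3) + (x$1 *s v1 - x$2 *s v2 - x$3 *s v3)"
    by (simp add: vec_eq_iff algebra_simps)
  ultimately have "(2 * x$1) *s v1 = 0" using rel by simp
  then have x1: "x$1 = 0" using nz by (simp add: smult_eq_0_iff)
  with rel have rel': "x$2 *s v2 + x$3 *s v3 = 0" by simp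
  then have "M *v (x$2 *s v2 + x$3 *s v3) = 0" by simp
  then have "x$2 *s v2 - x$3 *s v3 = 0"
    by (simp add: matrix_vector_right_distrib matrix_vector_mult_smult ev vector_smult_rneg)
  moreover have "(2 * x$2) *s v2 = (x$2 *s v2 + x$3 *s v3) + (x$2 *s v2 - x$3 *s v3)"
    by (simp add: vec_eq_iff algebra_simps)
  ultimately have "(2 * x$2) *s v2 = 0" using rel' by simp
  then have x2: "x$2 = 0" using nz by (simp add: smult_eq_0_iff)
  with rel' have "x$3 = 0" using nz by (simp add: smult_eq_0_iff)
  with x1 x2 x show False by (simp add: vec3_eq_iff)
qed

lemma klein_eigenvectors_involutions:
  assumes "klein_eigenvectors N M v1 v2 v3"
  shows "N ** N = mat 1" "M ** M = mat 1"
  using assms klein_eigenvectors_independent[OF assms]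
  by (auto intro!: matrix_eq_on_basis simp: klein_eigenvectors_def matrix_vector_mul_assoc[symmetric]
      matrix_vector_mult_uminus)

lemma klein_eigenvectors_card:
  assumes "klein_eigenvectors N M v1 v2 v3"
  shows "card {mat 1, N, M, N ** M} = 4"
proof -
  have ev: "v1 \<noteq> 0" "v2 \<noteq> 0" "N *v v1 = v1" "M *v v1 = - v1" "N *v v2 = - v2" "M *v v2 = v2"
    using assms by (simp_all add: klein_eigenvectors_def)
  have neg: "v \<noteq> - v" if "v \<noteq> 0" for v :: "int^3" using that by (auto simp: vec3_eq_iff)
  have "X \<noteq> Y" if "X *v v = v" "Y *v v = - v" "v \<noteq> 0" for X Y :: "int^3^3" and v
    using that neg[OF that(3)] by force
  moreover have "(N ** M) *v v1 = - v1" "(N ** M) *v v2 = - v2"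
    using ev by (simp_all add: matrix_vector_mul_assoc[symmetric] matrix_vector_mult_uminus)
  ultimately have "mat 1 \<noteq> N" "mat 1 \<noteq> M" "mat 1 \<noteq> N ** M" "N \<noteq> M" "N \<noteq> N ** M"
    "M \<noteq> N ** M"
    using ev matrix_vector_mul_lid by metis+
  then show ?thesis by simp
qed

lemma klein_eigenvectors_rescale:
  assumes "klein_eigenvectors N M (c *s p) v2 v3"
  shows "klein_eigenvectors N M p v2 v3"
proof -
  have "c \<noteq> 0" "p \<noteq> 0" using assms by (auto simp: klein_eigenvectors_def)
  have "c *s (N *v p) = c *s p" "c *s (M *v p) = c *s (- p)"
    using assms by (simp_all add: klein_eigenvectors_def matrix_vector_mult_smult vector_smult_rneg)
  then have "N *v p = p" "M *v p = - p"
    using smult_left_cancel[OF \<open>c \<noteq> 0\<close>] by blast+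
  with \<open>p \<noteq> 0\<close> assms show ?thesis by (simp add: klein_eigenvectors_def)
qed

lemma klein_eigenvectors_conjugate:
  assumes "Q ** Q' = mat 1" "klein_eigenvectors N M v1 v2 v3"
  shows "klein_eigenvectors (Q' ** N ** Q) (Q' ** M ** Q) (Q' *v v1) (Q' *v v2) (Q' *v v3)"
proof -
  have QQ': "Q *v (Q' *v v) = v" for v by (simp add: matrix_vector_mul_assoc assms(1))
  have conj: "(Q' ** X ** Q) *v (Q' *v v) = Q' *v (X *v v)" for X :: "int^3^3" and v
    by (simp add: matrix_vector_mul_assoc[symmetric] QQ')
  have "Q' *v v \<noteq> 0" if "v \<noteq> 0" for v
    using that QQ' by (metis matrix_vector_mult_0_right)
  with assms(2) show ?thesis by (simp add: klein_eigenvectors_def conj matrix_vector_mult_uminus)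
qed

section \<open>The normal form\<close>

definition klein_N :: "int \<Rightarrow> int \<Rightarrow> int^3^3" where
  "klein_N a b = vector [vector [1, a, b], vector [0, -1, 0], vector [0, 0, -1]]"

definition klein_M :: "int \<Rightarrow> int \<Rightarrow> int^3^3" where
  "klein_M c d = vector [vector [-1, 0, c], vector [0, -1, d], vector [0, 0, 1]]"

lemma int_involution_2x2_minus_eigenvector:
  fixes m11 m12 m21 m22 :: int
  assumes inv: "m11 * m11 + m12 * m21 = 1" "m11 * m12 + m12 * m22 = 0"
      "m21 * m11 + m22 * m21 = 0" "m21 * m12 + m22 * m22 = 1"
    and not_id: "\<not> (m11 = 1 \<and> m12 = 0 \<and> m21 = 0 \<and> m22 = 1)"
  shows "\<exists>u1 u2 a b. a * u1 + b * u2 = 1 \<and>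
     m11 * u1 + m12 * u2 = - u1 \<and> m21 * u1 + m22 * u2 = - u2"
proof -
  text \<open>Since \<open>m\<^sup>2 = 1\<close>, the columns of \<open>m - 1\<close> lie in the \<open>-1\<close>-eigenspace.\<close>
  obtain c1 c2 where c: "c1 \<noteq> 0 \<or> c2 \<noteq> 0"
    "m11 * c1 + m12 * c2 = - c1" "m21 * c1 + m22 * c2 = - c2"
  proof (cases "m11 \<noteq> 1 \<or> m21 \<noteq> 0")
    case True
    with inv show ?thesis by (intro that[of "m11 - 1" m21]) (auto simp: algebra_simps)
  next
    case False
    with not_id have "m12 \<noteq> 0 \<or> m22 \<noteq> 1" by auto
    with inv show ?thesis by (intro that[of m12 "m22 - 1"]) (auto simp: algebra_simps)
  qed
  obtain g u1 u2 a b where gu: "c1 = g * u1" "c2 = g * u2" and ab: "a * u1 + b * u2 = 1"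
    using int_pair_primitive by blast
  have "g \<noteq> 0" using c(1) gu by auto
  have "g * (m11 * u1 + m12 * u2 + u1) = 0" "g * (m21 * u1 + m22 * u2 + u2) = 0"
    using c(2,3) unfolding gu by (simp_all add: algebra_simps)
  with \<open>g \<noteq> 0\<close> have "m11 * u1 + m12 * u2 = - u1" "m21 * u1 + m22 * u2 = - u2" by simp_all
  with ab show ?thesis by blast
qed

lemma int_involution_2x2_basis:
  fixes m11 m12 m21 m22 :: int
  assumes inv: "m11 * m11 + m12 * m21 = 1" "m11 * m12 + m12 * m22 = 0"
      "m21 * m11 + m22 * m21 = 0" "m21 * m12 + m22 * m22 = 1"
    and not_minus_id: "\<not> (m11 = -1 \<and> m12 = 0 \<and> m21 = 0 \<and> m22 = -1)"
    and not_id: "\<not> (m11 = 1 \<and> m12 = 0 \<and> m21 = 0 \<and> m22 = 1)"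
  shows "\<exists>u1 u2 t1 t2 d. u1 * t2 - u2 * t1 = 1 \<and>
     m11 * u1 + m12 * u2 = - u1 \<and> m21 * u1 + m22 * u2 = - u2 \<and>
     m11 * t1 + m12 * t2 = d * u1 + t1 \<and> m21 * t1 + m22 * t2 = d * u2 + t2"
proof -
  obtain u1 u2 a b where ab: "a * u1 + b * u2 = 1"
    and u: "m11 * u1 + m12 * u2 = - u1" "m21 * u1 + m22 * u2 = - u2"
    using int_involution_2x2_minus_eigenvector[OF inv not_id] by blast
  define d where "d = (m11 * (-b) + m12 * a) * a - (m21 * (-b) + m22 * a) * (-b)"
  define e where "e = u1 * (m21 * (-b) + m22 * a) - u2 * (m11 * (-b) + m12 * a)"
  text \<open>\<open>e\<close> is the eigenvalue of \<open>m\<close> on the quotient by the line of \<open>u\<close>; it is \<open>\<plusminus>1\<close>,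
    and \<open>-1\<close> would force \<open>m = -1\<close>.\<close>
  have "e * e = 1" and "d * (e - 1) = 0"
    using inv u ab unfolding d_def e_def by algebra+
  have "e = 1"
  proof (rule ccontr)
    assume "e \<noteq> 1"
    with \<open>e * e = 1\<close> have "e = -1" by (auto simp: zmult_eq_1_iff)
    with \<open>d * (e - 1) = 0\<close> have "d = 0" by simp
    with \<open>e = -1\<close> have "m11 = -1 \<and> m12 = 0 \<and> m21 = 0 \<and> m22 = -1"
      using u ab unfolding d_def e_def by (intro conjI; algebra)
    with not_minus_id show False by blast
  qed
  then have "m11 * (-b) + m12 * a = d * u1 + (-b)" "m21 * (-b) + m22 * a = d * u2 + a"
    using ab unfolding d_def e_def by algebra+
  moreover have "u1 * a - u2 * (-b) = 1" using ab by (simp add: algebra_simps)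
  ultimately show ?thesis using u by blast
qed

lemma klein_eigenvectors_axis_N:
  assumes "klein_eigenvectors N M (axis 1 1) v2 v3"
  shows "N = klein_N (N$1$2) (N$1$3)"
proof -
  have "triple (axis 1 1) v2 v3 \<noteq> 0" using klein_eigenvectors_independent[OF assms] .
  then have D: "v2$2 * v3$3 - v2$3 * v3$2 \<noteq> 0" by (simp add: triple_def rdot_def axis_def)
  have ev: "N *v axis 1 1 = axis 1 1" "N *v v2 = - v2" "N *v v3 = - v3"
    using assms by (simp_all add: klein_eigenvectors_def)
  then have "N$i$1 = axis 1 1 $ i" for i by (metis matrix_vector_mult_axis)
  then have col1: "N$1$1 = 1" "N$2$1 = 0" "N$3$1 = 0" by (simp_all add: axis_def)
  have "N$2$2 * v2$2 + N$2$3 * v2$3 = - v2$2" "N$2$2 * v3$2 + N$2$3 * v3$3 = - v3$2"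
    "N$3$2 * v2$2 + N$3$3 * v2$3 = - v2$3" "N$3$2 * v3$2 + N$3$3 * v3$3 = - v3$3"
    using ev(2,3) col1 by (simp_all add: vec3_eq_iff matrix_vector_mult_3)
  then have "(N$2$2 + 1) * (v2$2 * v3$3 - v2$3 * v3$2) = 0"
    "N$2$3 * (v2$2 * v3$3 - v2$3 * v3$2) = 0" "N$3$2 * (v2$2 * v3$3 - v2$3 * v3$2) = 0"
    "(N$3$3 + 1) * (v2$2 * v3$3 - v2$3 * v3$2) = 0"
    by algebra+
  with D col1 show ?thesis by (simp add: klein_N_def mat3_eq_iff)
qed

lemma klein_eigenvectors_axis_M:
  assumes "klein_eigenvectors N M (axis 1 1) v2 v3"
  shows "M$1$1 = -1" "M$2$1 = 0" "M$3$1 = 0"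
    and "\<not> (M$2$2 = -1 \<and> M$2$3 = 0 \<and> M$3$2 = 0 \<and> M$3$3 = -1)"
    and "\<not> (M$2$2 = 1 \<and> M$2$3 = 0 \<and> M$3$2 = 0 \<and> M$3$3 = 1)"
proof -
  have "triple (axis 1 1) v2 v3 \<noteq> 0" using klein_eigenvectors_independent[OF assms] .
  then have D: "v2$2 * v3$3 - v2$3 * v3$2 \<noteq> 0" by (simp add: triple_def rdot_def axis_def)
  have ev: "M *v axis 1 1 = - axis 1 1" "M *v v2 = v2" "M *v v3 = - v3"
    using assms by (simp_all add: klein_eigenvectors_def)
  then have "M$i$1 = - axis 1 1 $ i" for i by (metis matrix_vector_mult_axis vector_uminus_component)
  then show col1: "M$1$1 = -1" "M$2$1 = 0" "M$3$1 = 0" by (simp_all add: axis_def)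
  show "\<not> (M$2$2 = -1 \<and> M$2$3 = 0 \<and> M$3$2 = 0 \<and> M$3$3 = -1)"
  proof
    assume "M$2$2 = -1 \<and> M$2$3 = 0 \<and> M$3$2 = 0 \<and> M$3$3 = -1"
    then have "v2$2 = 0" "v2$3 = 0" using ev(2) col1 by (simp_all add: vec3_eq_iff matrix_vector_mult_3)
    with D show False by simp
  qed
  show "\<not> (M$2$2 = 1 \<and> M$2$3 = 0 \<and> M$3$2 = 0 \<and> M$3$3 = 1)"
  proof
    assume "M$2$2 = 1 \<and> M$2$3 = 0 \<and> M$3$2 = 0 \<and> M$3$3 = 1"
    then have "v3$2 = 0" "v3$3 = 0" using ev(3) col1 by (simp_all add: vec3_eq_iff matrix_vector_mult_3)
    with D show False by simp
  qed
qed

lemma klein_normal_form_axis: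
  assumes kl: "klein_eigenvectors N M (axis 1 1) v2 v3"
  shows "\<exists>F G :: int^3^3. \<exists>a b c d. F ** G = mat 1 \<and> G ** F = mat 1 \<and>
           N ** F = F ** klein_N a b \<and> M ** F = F ** klein_M c d"
proof -
  obtain n12 n13 where N: "N = klein_N n12 n13" using klein_eigenvectors_axis_N[OF kl] by blast
  note M = klein_eigenvectors_axis_M[OF kl]
  have "M ** M = mat 1" using klein_eigenvectors_involutions[OF kl] by simp
  then have sq: "(M ** M)$i$j = mat 1 $ i $ j" for i j by simp
  have inv: "M$2$2 * M$2$2 + M$2$3 * M$3$2 = 1" "M$2$2 * M$2$3 + M$2$3 * M$3$3 = 0"
    "M$3$2 * M$2$2 + M$3$3 * M$3$2 = 0" "M$3$2 * M$2$3 + M$3$3 * M$3$3 = 1"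
    using sq[of 2 2] sq[of 2 3] sq[of 3 2] sq[of 3 3] M(1-3)
    by (simp_all add: matrix_matrix_mult_3 mat_def)
  have row1: "M$1$2 * M$2$2 + M$1$3 * M$3$2 = M$1$2" "M$1$2 * M$2$3 + M$1$3 * M$3$3 = M$1$3"
    using sq[of 1 2] sq[of 1 3] M(1-3) by (simp_all add: matrix_matrix_mult_3 mat_def)
  obtain u1 u2 t1 t2 d where ut: "u1 * t2 - u2 * t1 = 1"
    "M$2$2 * u1 + M$2$3 * u2 = - u1" "M$3$2 * u1 + M$3$3 * u2 = - u2"
    "M$2$2 * t1 + M$2$3 * t2 = d * u1 + t1" "M$3$2 * t1 + M$3$3 * t2 = d * u2 + t2"
    using int_involution_2x2_basis[OF inv M(4,5)] by blast
  text \<open>The row \<open>(M\<^sub>1\<^sub>2, M\<^sub>1\<^sub>3)\<close> is a left \<open>1\<close>-eigenvector of the lower block,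
    hence orthogonal to its \<open>-1\<close>-eigenvector \<open>u\<close>.\<close>
  have "M$1$2 * u1 + M$1$3 * u2
      = (M$1$2 * M$2$2 + M$1$3 * M$3$2) * u1 + (M$1$2 * M$2$3 + M$1$3 * M$3$3) * u2"
    by (simp only: row1)
  also have "\<dots> = M$1$2 * (M$2$2 * u1 + M$2$3 * u2) + M$1$3 * (M$3$2 * u1 + M$3$3 * u2)"
    by (simp add: algebra_simps)
  also have "\<dots> = - (M$1$2 * u1 + M$1$3 * u2)"
    by (simp only: ut(2,3) mult_minus_right minus_add_distrib)
  finally have Mu: "M$1$2 * u1 + M$1$3 * u2 = 0" by linarith
  define F :: "int^3^3" where "F = vector [vector [1, 0, 0], vector [0, u1, t1], vector [0, u2, t2]]"
  define G :: "int^3^3"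
    where "G = vector [vector [1, 0, 0], vector [0, t2, - t1], vector [0, - u2, u1]]"
  have "F ** G = mat 1" "G ** F = mat 1"
    using ut(1) by (simp_all add: F_def G_def mat3_eq_iff matrix_matrix_mult_3 mat_def algebra_simps)
  moreover have "N ** F = F ** klein_N (n12 * u1 + n13 * u2) (n12 * t1 + n13 * t2)"
    by (simp add: N F_def klein_N_def mat3_eq_iff matrix_matrix_mult_3)
  moreover have "M ** F = F ** klein_M (M$1$2 * t1 + M$1$3 * t2) d"
    using M(1-3) ut(2-5) Mu by (simp add: F_def klein_M_def mat3_eq_iff matrix_matrix_mult_3)
  ultimately show ?thesis by blast
qed

lemma klein_normal_form:
  assumes "klein_eigenvectors N M v1 v2 v3"
  shows "\<exists>F G :: int^3^3. \<exists>a b c d. F ** G = mat 1 \<and> G ** F = mat 1 \<and>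
           N ** F = F ** klein_N a b \<and> M ** F = F ** klein_M c d"
proof -
  have "v1 \<noteq> 0" using assms by (simp add: klein_eigenvectors_def)
  then obtain k p s where "v1 = k *s p" "rdot s p = 1" using primitive_vector by blast
  then have kl: "klein_eigenvectors N M p v2 v3" using assms klein_eigenvectors_rescale by blast
  obtain Q Q' :: "int^3^3" where Q: "Q ** Q' = mat 1" "Q' ** Q = mat 1" "Q *v axis 1 1 = p"
    using unimodular_completion[OF \<open>rdot s p = 1\<close>] by blast
  have "Q' *v p = axis 1 1" by (simp flip: Q(3) add: matrix_vector_mul_assoc Q(2))
  then have "klein_eigenvectors (Q' ** N ** Q) (Q' ** M ** Q) (axis 1 1) (Q' *v v2) (Q' *v v3)"
    using klein_eigenvectors_conjugate[OF Q(1) kl] by simp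
  then obtain F G a b c d where F: "F ** G = mat 1" "G ** F = mat 1"
    "(Q' ** N ** Q) ** F = F ** klein_N a b" "(Q' ** M ** Q) ** F = F ** klein_M c d"
    using klein_normal_form_axis by blast
  have "(Q ** F) ** (G ** Q') = mat 1" "(G ** Q') ** (Q ** F) = mat 1"
    by (metis F(1,2) Q(1,2) matrix_mul_assoc matrix_mul_rid)+
  moreover have "X ** (Q ** F) = (Q ** F) ** T" if "(Q' ** X ** Q) ** F = F ** T" for X T
    by (metis that Q(1) matrix_mul_assoc matrix_mul_lid)
  ultimately show ?thesis using F(3,4) by blast
qed

theorem lemma2p2:
  fixes N M :: "int^3^3"
  assumes invN: "invertible N" and invM: "invertible M"
    and comm: "N ** M = M ** N"
    and eig: "\<And>n m :: int. int_mat_eigenvalue (matzpow N n ** matzpow M m) 1"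
    and fix0: "{k :: int^3. \<forall>n m :: int. (matzpow N n ** matzpow M m) *v k = k} = {0}"
  shows "(\<exists>P :: int^3^3. \<exists>a b c d :: int. invertible P \<and>
            P ** N ** matrix_inv P = vector [vector [1, a, b], vector [0, -1, 0], vector [0, 0, -1]] \<and>
            P ** M ** matrix_inv P = vector [vector [-1, 0, c], vector [0, -1, d], vector [0, 0, 1]])
       \<and> card {matzpow N n ** matzpow M m | n m :: int. True} = 4
       \<and> (\<forall>g \<in> {matzpow N n ** matzpow M m | n m :: int. True}. g ** g = mat 1)"
proof -
  note fixed = int_mat_eigenvalue_1_imp_fixed_vector[OF eig]
  have no_common: "x = 0" if "N *v x = x" "M *v x = x" for x
    using fix0 matzpow_fixed[OF invN that(1)] matzpow_fixed[OF invM that(2)]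
    by (auto simp: matrix_vector_mul_assoc[symmetric])
  obtain v1 v2 v3 where kl: "klein_eigenvectors N M v1 v2 v3"
    using klein_eigenvectors_exist[OF invN invM comm no_common]
      fixed[of 1 0] fixed[of 0 1] fixed[of 1 1] fixed[of 1 2]
    by (auto simp: matrix_mul_assoc)
  obtain F G a b c d where F: "F ** G = mat 1" "G ** F = mat 1"
    "N ** F = F ** klein_N a b" "M ** F = F ** klein_M c d"
    using klein_normal_form[OF kl] by blast
  have "invertible G" using F(1,2) invertible_def by blast
  note involutions = klein_eigenvectors_involutions[OF kl]
  have "(N ** M) ** (N ** M) = mat 1"
    by (metis involutions comm matrix_mul_assoc matrix_mul_lid)
  then show ?thesis
    unfolding zpow_products_of_involutions[OF involutions]
    using conjugate_by_basis[OF F(1,2,3)] conjugate_by_basis[OF F(1,2,4)] \<open>invertible G\<close>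
      klein_eigenvectors_card[OF kl] involutions
    by (auto simp: klein_N_def klein_M_def)
qed

end
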